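(* Let $n\ge1$, $\hat r\in\mathbb R^n$, $\delta\ge0$. For every $\pi\in\Delta_n$, $$\max_{\|\Delta\|_1\le\delta}\mathrm{Reg}(\pi,\hat r+\Delta)=\delta+\max_{1\le i\le n}(\hat r_i-\delta\pi_i)-\langle\pi,\hat r\rangle.$$ Moreover, the maximum is attained by $\Delta^\star=\delta e_k$ for any $k\in\arg\max_{1\le i\le n}\{\hat r_i-\delta\pi_i\}$.
   Context: $\Delta_n:=\{q\in\mathbb R^n_+:\sum_iq_i=1\}$. For $\pi\in\Delta_n$ and $s\in\mathbb R^n$, the regret is $\mathrm{Reg}(\pi,s):=\max_{\beta\in\Delta_n}\langle\beta-\pi,s\rangle$. $e_k$ denotes the $k$-th standard basis vector of $\mathbb R^n$. *)

theory Defs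
  imports "HOL-Analysis.Analysis"
begin

definition prob_simplex :: "(real ^ 'n::finite) set" where
  "prob_simplex = {q. (\<forall>i. 0 \<le> q $ i) \<and> (\<Sum>i\<in>UNIV. q $ i) = 1}"

definition Reg :: "real ^ 'n \<Rightarrow> real ^ 'n \<Rightarrow> real" where
  "Reg \<pi> s = (SUP \<beta>\<in>prob_simplex. (\<beta> - \<pi>) \<bullet> s)"

definition l1norm :: "real ^ 'n \<Rightarrow> real" where
  "l1norm v = (\<Sum>i\<in>UNIV. \<bar>v $ i\<bar>)"

end

theory Submission
  imports Defs
begin

text \<open>Over the simplex a linear function is maximised at a vertex, so
  \<open>Reg \<pi> s = max\<^sub>i s\<^sub>i - \<pi> \<bullet> s\<close>. If \<open>j\<close> is a maximal coordinate of \<open>rhat + D\<close>, then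
  \<open>Reg \<pi> (rhat + D) = rhat\<^sub>j - \<pi> \<bullet> rhat + (e\<^sub>j - \<pi>) \<bullet> D\<close>, and Hoelder's inequality with
  \<open>\<parallel>e\<^sub>j - \<pi>\<parallel>\<^sub>\<infinity> = 1 - \<pi>\<^sub>j\<close> bounds the last term by \<open>\<delta> (1 - \<pi>\<^sub>j)\<close>. Putting the whole
  budget \<open>\<delta>\<close> on a coordinate \<open>k\<close> maximising \<open>rhat\<^sub>k - \<delta> \<pi>\<^sub>k\<close> attains the bound.\<close>

lemma ex_eq_Max_range:
  fixes f :: "'a::finite \<Rightarrow> 'b::linorder"
  obtains j where "f j = (MAX i\<in>UNIV. f i)"
proof -
  have "(MAX i\<in>UNIV. f i) \<in> range f"
    by (rule Max_in) auto
  then show thesis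
    using that by (metis rangeE)
qed

lemma prob_simplexD:
  assumes "\<pi> \<in> prob_simplex"
  shows "0 \<le> \<pi> $ i" and "(\<Sum>i\<in>UNIV. \<pi> $ i) = 1"
  using assms unfolding prob_simplex_def by auto

lemma axis_in_prob_simplex: "axis k 1 \<in> prob_simplex"
  unfolding prob_simplex_def by (simp add: axis_def)

lemma prob_simplex_le_1:
  assumes "\<pi> \<in> prob_simplex"
  shows "\<pi> $ i \<le> 1"
  using member_le_sum[of i UNIV "\<lambda>i. \<pi> $ i"] prob_simplexD[OF assms] by simp

lemma prob_simplex_add_le_1:
  assumes "\<pi> \<in> prob_simplex" and "i \<noteq> j"
  shows "\<pi> $ i + \<pi> $ j \<le> 1"
proof -
  have "\<pi> $ i + \<pi> $ j = (\<Sum>l\<in>{i, j}. \<pi> $ l)"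
    using assms(2) by simp
  also have "\<dots> \<le> (\<Sum>l\<in>UNIV. \<pi> $ l)"
    by (rule sum_mono2) (auto simp: prob_simplexD[OF assms(1)])
  finally show ?thesis
    using prob_simplexD[OF assms(1)] by simp
qed

lemma inner_prob_simplex_le_Max:
  assumes "\<beta> \<in> prob_simplex"
  shows "\<beta> \<bullet> s \<le> (MAX i\<in>UNIV. s $ i)"
proof -
  have "\<beta> \<bullet> s = (\<Sum>i\<in>UNIV. \<beta> $ i * s $ i)"
    by (simp add: inner_vec_def)
  also have "\<dots> \<le> (\<Sum>i\<in>UNIV. \<beta> $ i * (MAX i\<in>UNIV. s $ i))"
    by (intro sum_mono mult_left_mono) (auto simp: prob_simplexD[OF assms])
  also have "\<dots> = (MAX i\<in>UNIV. s $ i)"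
    by (simp add: sum_distrib_right[symmetric] prob_simplexD[OF assms])
  finally show ?thesis .
qed

lemma Reg_eq_Max_minus_inner: "Reg \<pi> s = (MAX i\<in>UNIV. s $ i) - \<pi> \<bullet> s"
  unfolding Reg_def
proof (rule cSup_eq_maximum)
  obtain j where j: "s $ j = (MAX i\<in>UNIV. s $ i)"
    by (rule ex_eq_Max_range)
  then have "(axis j 1 - \<pi>) \<bullet> s = (MAX i\<in>UNIV. s $ i) - \<pi> \<bullet> s"
    by (simp add: inner_diff_left inner_axis')
  then show "(MAX i\<in>UNIV. s $ i) - \<pi> \<bullet> s \<in> (\<lambda>\<beta>. (\<beta> - \<pi>) \<bullet> s) ` prob_simplex"
    using axis_in_prob_simplex by (metis image_eqI)
qed (auto simp: inner_diff_left dest: inner_prob_simplex_le_Max)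

lemma inner_le_l1norm:
  fixes u v :: "real ^ 'n"
  assumes "\<And>i. \<bar>u $ i\<bar> \<le> c"
  shows "u \<bullet> v \<le> c * l1norm v"
proof -
  have "u \<bullet> v = (\<Sum>i\<in>UNIV. u $ i * v $ i)"
    by (simp add: inner_vec_def)
  also have "\<dots> \<le> (\<Sum>i\<in>UNIV. c * \<bar>v $ i\<bar>)"
  proof (rule sum_mono)
    fix i
    have "u $ i * v $ i \<le> \<bar>u $ i\<bar> * \<bar>v $ i\<bar>"
      by (metis abs_ge_self abs_mult)
    also have "\<dots> \<le> c * \<bar>v $ i\<bar>"
      using assms by (rule mult_right_mono) simp
    finally show "u $ i * v $ i \<le> c * \<bar>v $ i\<bar>" .
  qed
  also have "\<dots> = c * l1norm v"
    by (simp add: l1norm_def sum_distrib_left)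
  finally show ?thesis .
qed

lemma abs_axis_minus_prob_simplex_le:
  assumes "\<pi> \<in> prob_simplex"
  shows "\<bar>(axis j 1 - \<pi>) $ i\<bar> \<le> 1 - \<pi> $ j"
proof (cases "i = j")
  case True
  then show ?thesis
    using prob_simplex_le_1[OF assms] by (simp add: axis_def)
next
  case False
  then show ?thesis
    using prob_simplexD(1)[OF assms] prob_simplex_add_le_1[OF assms False] by (simp add: axis_def)
qed

lemma l1norm_scaleR_axis: "l1norm (c *\<^sub>R axis k (1::real)) = \<bar>c\<bar>"
proof -
  have "l1norm (c *\<^sub>R axis k (1::real)) = (\<Sum>i\<in>UNIV. if i = k then \<bar>c\<bar> else 0)"
    unfolding l1norm_def by (rule sum.cong) (auto simp: axis_def)
  then show ?thesis
    by simp
qed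

lemma Reg_perturbed_le:
  assumes "\<pi> \<in> prob_simplex" and "l1norm D \<le> \<delta>"
  shows "Reg \<pi> (r + D) \<le> \<delta> + (MAX i\<in>UNIV. r $ i - \<delta> * \<pi> $ i) - \<pi> \<bullet> r"
proof -
  obtain j where j: "(r + D) $ j = (MAX i\<in>UNIV. (r + D) $ i)"
    by (rule ex_eq_Max_range)
  have "(axis j 1 - \<pi>) \<bullet> D \<le> (1 - \<pi> $ j) * l1norm D"
    by (rule inner_le_l1norm) (rule abs_axis_minus_prob_simplex_le[OF assms(1)])
  also have "\<dots> \<le> (1 - \<pi> $ j) * \<delta>"
    using assms prob_simplex_le_1 by (intro mult_left_mono) auto
  finally have "D $ j - \<pi> \<bullet> D \<le> \<delta> - \<delta> * \<pi> $ j"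
    by (simp add: inner_diff_left inner_axis' algebra_simps)
  moreover have "r $ j - \<delta> * \<pi> $ j \<le> (MAX i\<in>UNIV. r $ i - \<delta> * \<pi> $ i)"
    by simp
  moreover have "Reg \<pi> (r + D) = r $ j - \<pi> \<bullet> r + (D $ j - \<pi> \<bullet> D)"
    using j by (simp add: Reg_eq_Max_minus_inner inner_add_right)
  ultimately show ?thesis
    by linarith
qed

lemma Reg_perturbed_axis_ge:
  assumes "r $ k - \<delta> * \<pi> $ k = (MAX i\<in>UNIV. r $ i - \<delta> * \<pi> $ i)"
  shows "\<delta> + (MAX i\<in>UNIV. r $ i - \<delta> * \<pi> $ i) - \<pi> \<bullet> r \<le> Reg \<pi> (r + \<delta> *\<^sub>R axis k 1)"
proof -
  have "r $ k + \<delta> \<le> (MAX i\<in>UNIV. (r + \<delta> *\<^sub>R axis k 1) $ i)"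
    by (rule Max_ge_iff[THEN iffD2]) (auto simp: axis_def intro!: bexI[of _ k])
  then show ?thesis
    using assms by (simp add: Reg_eq_Max_minus_inner inner_add_right inner_axis)
qed

theorem mainTheorem4:
  fixes rhat :: "real ^ 'n" and \<delta> :: real and \<pi> :: "real ^ 'n"
  assumes "\<delta> \<ge> 0" and "\<pi> \<in> prob_simplex"
  shows "(SUP D\<in>{D. l1norm D \<le> \<delta>}. Reg \<pi> (rhat + D))
           = \<delta> + (MAX i\<in>UNIV. rhat $ i - \<delta> * \<pi> $ i) - \<pi> \<bullet> rhat
       \<and> (\<forall>k. rhat $ k - \<delta> * \<pi> $ k = (MAX i\<in>UNIV. rhat $ i - \<delta> * \<pi> $ i)
             \<longrightarrow> l1norm (\<delta> *\<^sub>R axis k 1) \<le> \<delta>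
               \<and> Reg \<pi> (rhat + \<delta> *\<^sub>R axis k 1)
                   = (SUP D\<in>{D. l1norm D \<le> \<delta>}. Reg \<pi> (rhat + D)))"
proof -
  let ?V = "\<delta> + (MAX i\<in>UNIV. rhat $ i - \<delta> * \<pi> $ i) - \<pi> \<bullet> rhat"
  have budget: "l1norm (\<delta> *\<^sub>R axis k 1) \<le> \<delta>" for k :: 'n
    using assms(1) by (simp add: l1norm_scaleR_axis)
  have attained: "Reg \<pi> (rhat + \<delta> *\<^sub>R axis k 1) = ?V"
    if "rhat $ k - \<delta> * \<pi> $ k = (MAX i\<in>UNIV. rhat $ i - \<delta> * \<pi> $ i)" for k
    using Reg_perturbed_axis_ge[OF that] Reg_perturbed_le[OF assms(2) budget] by (rule antisym[rotated])
  obtain k where "rhat $ k - \<delta> * \<pi> $ k = (MAX i\<in>UNIV. rhat $ i - \<delta> * \<pi> $ i)"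
    by (rule ex_eq_Max_range)
  then have "?V \<in> (\<lambda>D. Reg \<pi> (rhat + D)) ` {D. l1norm D \<le> \<delta>}"
    using attained budget by (metis (mono_tags, lifting) image_eqI mem_Collect_eq)
  then have "(SUP D\<in>{D. l1norm D \<le> \<delta>}. Reg \<pi> (rhat + D)) = ?V"
    by (rule cSup_eq_maximum) (use Reg_perturbed_le[OF assms(2)] in blast)
  with attained budget show ?thesis
    by auto
qed

end
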